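(* Let $L>0$ be even, $A=\{x\in\{0,1\}^L: x_1+\dots+x_L=L/2\}$, $\mathrm{START}=(1,\dots,1,0,\dots,0)$ ($L/2$ ones followed by $L/2$ zeros) and $\mathrm{ACTIVE}=(0,\dots,0,1,\dots,1)$ ($L/2$ zeros followed by $L/2$ ones). There exist $\mu>0$ and a Boolean network with inputs $D$ with input vector $p=(p_1,\dots,p_L)$ and output vector $q=(q_1,q_2)$ such that the following holds for any initial condition of $D$ (at any initial time $\le 0$, with arbitrary inputs before time $0$). Let $M>1$ and let $p(0),\dots,p(M)$ be inputs with (i) $p(s)\in A$ for $0\le s\le M$, (ii) $p(0)=\mathrm{START}$, (iii) $p(s)\ne\mathrm{START}$ for $0<s\le M$. Let $j\ge0$ be such that $p(s)=\mathrm{ACTIVE}$ for $1\le s\le j$ and $p(j+1)\ne\mathrm{ACTIVE}$ (or $j=M$ if $p(1)=\dots=p(M)=\mathrm{ACTIVE}$). Then $q(s)=(1,0)$ for $\mu\le s\le\mu+j$ and $q(s)=(0,1)$ for $\mu+j<s\le\mu+M$. Moreover $D$ is cooperative, every node of its digraph has indegree and outdegree at most $2$, input variables have indegree $0$ and output variables have outdegree $0$. (The same holds after any time shift of the input sequence.)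
   Context: A Boolean network with inputs consists of finitely many Boolean variables, some designated as input variables whose values at each time are prescribed externally (arbitrarily), and the remaining (internal) variables, each updated simultaneously at each discrete time step by $x(t)=f_x(\text{values of all variables at time } t-1)$ for a Boolean function $f_x$; output variables are designated internal variables. It is cooperative if every update function $f_x$ is monotone nondecreasing with respect to the componentwise order (equivalently, expressible using only $\wedge$ and $\vee$). Its digraph has an arc from variable $y$ to internal variable $x$ iff $f_x$ actually depends on $y$. *)

theory Defs
  imports Main
begin

text \<open>Variables are natural numbers; V is the finite set of
  variables, I \<subseteq> V the input variables, and f x is the update function of an internal
  variable x \<in> V - I, applied to the state (values of all variables) at the previous time.\<close>

definition bn_wf :: "nat set \<Rightarrow> nat set \<Rightarrow> (nat \<Rightarrow> (nat \<Rightarrow> bool) \<Rightarrow> bool) \<Rightarrow> bool" where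
  "bn_wf V I f \<longleftrightarrow> finite V \<and> I \<subseteq> V \<and>
     (\<forall>x\<in>V - I. \<forall>s s'. (\<forall>v\<in>V. s v = s' v) \<longrightarrow> f x s = f x s')"

definition depends :: "(nat \<Rightarrow> (nat \<Rightarrow> bool) \<Rightarrow> bool) \<Rightarrow> nat \<Rightarrow> nat \<Rightarrow> bool" where
  "depends f x y \<longleftrightarrow> (\<exists>s. f x s \<noteq> f x (s(y := \<not> s y)))"

definition arc :: "nat set \<Rightarrow> nat set \<Rightarrow> (nat \<Rightarrow> (nat \<Rightarrow> bool) \<Rightarrow> bool) \<Rightarrow> nat \<Rightarrow> nat \<Rightarrow> bool" where
  "arc V I f y x \<longleftrightarrow> y \<in> V \<and> x \<in> V - I \<and> depends f x y"

definition indeg :: "nat set \<Rightarrow> nat set \<Rightarrow> (nat \<Rightarrow> (nat \<Rightarrow> bool) \<Rightarrow> bool) \<Rightarrow> nat \<Rightarrow> nat" where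
  "indeg V I f x = card {y. arc V I f y x}"

definition outdeg :: "nat set \<Rightarrow> nat set \<Rightarrow> (nat \<Rightarrow> (nat \<Rightarrow> bool) \<Rightarrow> bool) \<Rightarrow> nat \<Rightarrow> nat" where
  "outdeg V I f y = card {x. arc V I f y x}"

definition cooperative :: "nat set \<Rightarrow> nat set \<Rightarrow> (nat \<Rightarrow> (nat \<Rightarrow> bool) \<Rightarrow> bool) \<Rightarrow> bool" where
  "cooperative V I f \<longleftrightarrow> (\<forall>x\<in>V - I. mono (f x))"

definition is_run :: "nat set \<Rightarrow> nat set \<Rightarrow> (nat \<Rightarrow> (nat \<Rightarrow> bool) \<Rightarrow> bool) \<Rightarrow> int \<Rightarrow> (int \<Rightarrow> nat \<Rightarrow> bool) \<Rightarrow> bool" where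
  "is_run V I f t0 x \<longleftrightarrow> (\<forall>t>t0. \<forall>v\<in>V - I. x t v = f v (x (t - 1)))"

text \<open>Input vectors as functions on indices 1..L.\<close>
definition in_A :: "nat \<Rightarrow> (nat \<Rightarrow> bool) \<Rightarrow> bool" where
  "in_A L u \<longleftrightarrow> card {i\<in>{1..L}. u i} = L div 2"

definition is_START :: "nat \<Rightarrow> (nat \<Rightarrow> bool) \<Rightarrow> bool" where
  "is_START L u \<longleftrightarrow> (\<forall>i\<in>{1..L}. u i = (i \<le> L div 2))"

definition is_ACTIVE :: "nat \<Rightarrow> (nat \<Rightarrow> bool) \<Rightarrow> bool" where
  "is_ACTIVE L u \<longleftrightarrow> (\<forall>i\<in>{1..L}. u i = (L div 2 < i))"

end

theory Submission
  imports Defs "HOL-Library.Countable"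
begin

(*
  Write L = 2h.  The network is first built over a datatype of named nodes and then
  encoded into natural-number variables through the injection to_nat of countable types.

  Its encoding is a well-formed Boolean network, in-degrees
     are bounded by the predecessor lists, out-degrees by any list of readers, and runs of the
     encoding are runs of the node network.
  2. Balanced patterns (exactly h ones among 2h inputs): one half is full iff the other half is
     empty.  Hence START is detected by the AND of the first half and ACTIVE by the AND of the
     second, while their negations are detected by the OR of the other half.
  3. The concrete network: chains of AND/OR gates fed by delay lines compute the AND and the OR
     of each half, h steps late.  Writing S, A for the START and ACTIVE tests, the node Run True
     satisfies the two-step recurrence
       Run(n+h+4) = S(n) | (A(n) & S(n-1)) | (A(n) & A(n-1) & Run(n+h+2)),
     using only gates of in- and out-degree at most 2; the copy b = False is the dual circuit and
     computes the negation.  Out b is Run b delayed by one step.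
  4. Along a run (locale network_run), Run b at time n+h+4 equals b iff the inputs at times 1..n
     were all ACTIVE, so Out True and Out False read (1,0) up to time h+5+j and (0,1) afterwards.
     The theorem takes mu = h + 5, q1 = Out True and q2 = Out False.
*)

definition enc_upd :: "('a::countable \<Rightarrow> ('a \<Rightarrow> bool) \<Rightarrow> bool) \<Rightarrow> nat \<Rightarrow> (nat \<Rightarrow> bool) \<Rightarrow> bool" where
  "enc_upd upd n s = upd (from_nat n) (\<lambda>b. s (to_nat b))"

lemma enc_upd_to_nat [simp]: "enc_upd upd (to_nat a) s = upd a (\<lambda>b. s (to_nat b))"
  by (simp add: enc_upd_def)

text \<open>Input variables are never updated, so nothing points to them.\<close>
lemma input_indeg_zero: "v \<in> I \<Longrightarrow> indeg V I f v = 0"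
  unfolding indeg_def arc_def by simp

locale node_network =
  fixes nodes inputs :: "'a::countable set"
    and ins :: "'a \<Rightarrow> 'a list"
    and upd :: "'a \<Rightarrow> ('a \<Rightarrow> bool) \<Rightarrow> bool"
  assumes finite_nodes: "finite nodes"
    and inputs_nodes: "inputs \<subseteq> nodes"
    and ins_nodes: "a \<in> nodes - inputs \<Longrightarrow> set (ins a) \<subseteq> nodes"
    and upd_local: "a \<in> nodes - inputs \<Longrightarrow> (\<And>z. z \<in> set (ins a) \<Longrightarrow> s z = s' z) \<Longrightarrow> upd a s = upd a s'"
begin

lemma internal_vars: "to_nat ` nodes - to_nat ` inputs = to_nat ` (nodes - inputs)"
  by (simp add: image_set_diff)

lemma wf: "bn_wf (to_nat ` nodes) (to_nat ` inputs) (enc_upd upd)"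
  unfolding bn_wf_def internal_vars
proof (intro conjI ballI allI impI)
  show "finite (to_nat ` nodes)" using finite_nodes by simp
  show "to_nat ` inputs \<subseteq> to_nat ` nodes" using inputs_nodes by auto
  fix x and s s' :: "nat \<Rightarrow> bool" assume x: "x \<in> to_nat ` (nodes - inputs)" and agree: "\<forall>v\<in>to_nat ` nodes. s v = s' v"
  then obtain a where a: "a \<in> nodes - inputs" "x = to_nat a" by auto
  have "upd a (\<lambda>b. s (to_nat b)) = upd a (\<lambda>b. s' (to_nat b))"
    proof -
    have "\<forall>z\<in>set (ins a). s (to_nat z) = s' (to_nat z)" using ins_nodes[OF a(1)] agree by blast
    then show ?thesis by (intro upd_local[OF a(1)]) auto
  qed
  then show "enc_upd upd x s = enc_upd upd x s'" using a(2) by simp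
qed

lemma cooperative:
  assumes "\<And>a. a \<in> nodes - inputs \<Longrightarrow> mono (upd a)"
  shows "cooperative (to_nat ` nodes) (to_nat ` inputs) (enc_upd upd)"
  unfolding cooperative_def internal_vars
proof (intro ballI monoI)
  fix x and s s' :: "nat \<Rightarrow> bool" assume x: "x \<in> to_nat ` (nodes - inputs)" and "s \<le> s'"
  then have le: "(\<lambda>b. s (to_nat b)) \<le> (\<lambda>b. s' (to_nat b))" by (auto simp: le_fun_def)
  from x obtain a where a: "a \<in> nodes - inputs" "x = to_nat a" by auto
  show "enc_upd upd x s \<le> enc_upd upd x s'" using monoD[OF assms[OF a(1)] le] a(2) by simp
qed

lemma arc_ins:
  assumes "arc (to_nat ` nodes) (to_nat ` inputs) (enc_upd upd) y x"
  shows "\<exists>a\<in>nodes - inputs. x = to_nat a \<and> y \<in> to_nat ` set (ins a)"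
proof -
  from assms obtain a where a: "a \<in> nodes - inputs" "x = to_nat a"
    and dep: "depends (enc_upd upd) (to_nat a) y"
    unfolding arc_def internal_vars by auto
  from dep obtain s where s: "enc_upd upd (to_nat a) s \<noteq> enc_upd upd (to_nat a) (s(y := \<not> s y))"
    unfolding depends_def by auto
  have "y \<in> to_nat ` set (ins a)"
  proof (rule ccontr)
    assume "y \<notin> to_nat ` set (ins a)"
    then have "upd a (\<lambda>b. s (to_nat b)) = upd a (\<lambda>b. (s(y := \<not> s y)) (to_nat b))"
      by (intro upd_local[OF a(1)]) (auto simp: image_iff)
    with s show False by simp
  qed
  with a show ?thesis by blast
qed

lemma indeg_le: "indeg (to_nat ` nodes) (to_nat ` inputs) (enc_upd upd) (to_nat a) \<le> length (ins a)"
proof -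
  have "{y. arc (to_nat ` nodes) (to_nat ` inputs) (enc_upd upd) y (to_nat a)} \<subseteq> set (map to_nat (ins a))"
  proof
    fix y assume "y \<in> {y. arc (to_nat ` nodes) (to_nat ` inputs) (enc_upd upd) y (to_nat a)}"
    then obtain a' where "to_nat a = to_nat a'" "y \<in> to_nat ` set (ins a')" using arc_ins by blast
    then show "y \<in> set (map to_nat (ins a))" by simp
  qed
  then have "indeg (to_nat ` nodes) (to_nat ` inputs) (enc_upd upd) (to_nat a) \<le> card (set (map to_nat (ins a)))"
    unfolding indeg_def by (intro card_mono) auto
  also have "\<dots> \<le> length (ins a)" by (metis card_length length_map)
  finally show ?thesis .
qed

lemma outdeg_le:
  assumes "\<And>a. a \<in> nodes - inputs \<Longrightarrow> b \<in> set (ins a) \<Longrightarrow> a \<in> set cs"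
  shows "outdeg (to_nat ` nodes) (to_nat ` inputs) (enc_upd upd) (to_nat b) \<le> length cs"
proof -
  have "{x. arc (to_nat ` nodes) (to_nat ` inputs) (enc_upd upd) (to_nat b) x} \<subseteq> set (map to_nat cs)"
  proof
    fix x assume "x \<in> {x. arc (to_nat ` nodes) (to_nat ` inputs) (enc_upd upd) (to_nat b) x}"
    then obtain a where "a \<in> nodes - inputs" "x = to_nat a" "to_nat b \<in> to_nat ` set (ins a)"
      using arc_ins by blast
    then show "x \<in> set (map to_nat cs)" using assms by auto
  qed
  then have "outdeg (to_nat ` nodes) (to_nat ` inputs) (enc_upd upd) (to_nat b) \<le> card (set (map to_nat cs))"
    unfolding outdeg_def by (intro card_mono) auto
  also have "\<dots> \<le> length cs" by (metis card_length length_map)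
  finally show ?thesis .
qed

lemma run_step:
  assumes "is_run (to_nat ` nodes) (to_nat ` inputs) (enc_upd upd) t0 x" "t0 < t" "a \<in> nodes - inputs"
  shows "x t (to_nat a) = upd a (\<lambda>b. x (t - 1) (to_nat b))"
  using assms unfolding is_run_def internal_vars by auto

end

lemma all_halves:
  "(\<forall>i\<in>{1..2 * h}. P i) \<longleftrightarrow> (\<forall>k\<in>{1..h}. P k) \<and> (\<forall>k\<in>{1..h::nat}. P (h + k))"
proof (intro iffI conjI ballI)
  fix i assume halves: "(\<forall>k\<in>{1..h}. P k) \<and> (\<forall>k\<in>{1..h}. P (h + k))" and i: "i \<in> {1..2 * h}"
  show "P i"
  proof (cases "i \<le> h")
    case False
    then have "i - h \<in> {1..h}" using i by auto
    then have "P (h + (i - h))" using halves by blast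
    then show ?thesis using False by simp
  qed (use halves i in auto)
qed auto

lemma start_iff: "is_START (2 * h) u \<longleftrightarrow> (\<forall>k\<in>{1..h}. u k) \<and> (\<forall>k\<in>{1..h}. \<not> u (h + k))"
  unfolding is_START_def all_halves by auto

lemma active_iff: "is_ACTIVE (2 * h) u \<longleftrightarrow> (\<forall>k\<in>{1..h}. \<not> u k) \<and> (\<forall>k\<in>{1..h}. u (h + k))"
  unfolding is_ACTIVE_def all_halves by auto

lemma all_iff_card: "(\<forall>k\<in>{1..h}. P k) \<longleftrightarrow> card {k\<in>{1..h::nat}. P k} = h"
proof
  assume "card {k\<in>{1..h}. P k} = h"
  then have "{k\<in>{1..h}. P k} = {1..h}" by (intro card_subset_eq) auto
  then show "\<forall>k\<in>{1..h}. P k" by blast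
next
  assume "\<forall>k\<in>{1..h}. P k"
  then have "{k\<in>{1..h}. P k} = {1..h}" by auto
  then show "card {k\<in>{1..h}. P k} = h" by simp
qed

lemma balanced_halves:
  assumes "in_A (2 * h) u"
  shows "(\<forall>k\<in>{1..h}. u k) \<longleftrightarrow> (\<forall>k\<in>{1..h}. \<not> u (h + k))"
    and "(\<forall>k\<in>{1..h}. u (h + k)) \<longleftrightarrow> (\<forall>k\<in>{1..h}. \<not> u k)"
proof -
  define F where "F = {k\<in>{1..h}. u k}"
  define G where "G = {k\<in>{1..h}. u (h + k)}"
  have "{i\<in>{1..2 * h}. u i} = F \<union> (+) h ` G"
  proof (intro equalityI subsetI)
    fix i assume i: "i \<in> {i\<in>{1..2 * h}. u i}"
    show "i \<in> F \<union> (+) h ` G"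
    proof (cases "i \<le> h")
      case False
      then have "i - h \<in> G" "i = h + (i - h)" using i unfolding G_def by auto
      then show ?thesis by blast
    qed (use i in \<open>auto simp: F_def\<close>)
  qed (auto simp: F_def G_def)
  moreover have "card (F \<union> (+) h ` G) = card F + card G"
  proof -
    have "F \<inter> (+) h ` G = {}" unfolding F_def G_def by auto
    then have "card (F \<union> (+) h ` G) = card F + card ((+) h ` G)"
      by (intro card_Un_disjoint) (auto simp: F_def G_def)
    then show ?thesis by (simp add: card_image)
  qed
  ultimately have sum: "card F + card G = h" using assms by (simp add: in_A_def)
  have F_empty: "(\<forall>k\<in>{1..h}. \<not> u k) \<longleftrightarrow> card F = 0" unfolding F_def by auto
  have G_empty: "(\<forall>k\<in>{1..h}. \<not> u (h + k)) \<longleftrightarrow> card G = 0" unfolding G_def by auto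
  show "(\<forall>k\<in>{1..h}. u k) \<longleftrightarrow> (\<forall>k\<in>{1..h}. \<not> u (h + k))"
    using all_iff_card[of h u] G_empty sum unfolding F_def by linarith
  show "(\<forall>k\<in>{1..h}. u (h + k)) \<longleftrightarrow> (\<forall>k\<in>{1..h}. \<not> u k)"
    using all_iff_card[of h "\<lambda>k. u (h + k)"] F_empty sum unfolding G_def by linarith
qed

text \<open>For a half g (True: inputs 1..h, False:
  inputs h+1..2h), Delay g k m is the k-th input of half g delayed by m steps, and Acc g c k is
  the conjunction (c = True) or disjunction (c = False) of the first k inputs of half g, delayed
  by k steps.\<close>
datatype node =
    is_input: Inp nat
  | Delay bool nat nat
  | Acc bool bool nat
  | Start1 bool | Start2 bool | Act1 bool | StartAct bool | Begin bool
  | ActAct1 bool | ActAct2 bool | Run bool | RunAct bool | Out bool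

instance node :: countable by countable_datatype

definition gate :: "bool \<Rightarrow> bool \<Rightarrow> bool \<Rightarrow> bool" where
  "gate c p q = (if c then p \<and> q else p \<or> q)"

definition half_index :: "nat \<Rightarrow> bool \<Rightarrow> nat \<Rightarrow> nat" where
  "half_index h g k = (if g then k else h + k)"

fun valid :: "nat \<Rightarrow> node \<Rightarrow> bool" where
  "valid h (Inp i) = (1 \<le> i \<and> i \<le> 2 * h)"
| "valid h (Delay g k m) = (1 \<le> m \<and> m < k \<and> k \<le> h)"
| "valid h (Acc g c k) = (1 \<le> k \<and> k \<le> h)"
| "valid h _ = True"

definition nodes :: "nat \<Rightarrow> node set" where
  "nodes h = {a. valid h a}"

definition inputs :: "nat \<Rightarrow> node set" where
  "inputs h = Inp ` {1..2 * h}"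

fun preds :: "nat \<Rightarrow> node \<Rightarrow> node list" where
  "preds h (Inp i) = []"
| "preds h (Delay g k m) = (if m = 1 then [Inp (half_index h g k)] else [Delay g k (m - 1)])"
| "preds h (Acc g c k) =
     (if k = 1 then [Inp (half_index h g 1)] else [Acc g c (k - 1), Delay g k (k - 1)])"
| "preds h (Start1 b) = [Acc b b h]"
| "preds h (Start2 b) = [Start1 b]"
| "preds h (Act1 b) = [Acc (\<not> b) b h]"
| "preds h (StartAct b) = [Act1 b, Start2 b]"
| "preds h (Begin b) = [Start2 b, StartAct b]"
| "preds h (ActAct1 b) = [Acc (\<not> b) b h, Act1 b]"
| "preds h (ActAct2 b) = [ActAct1 b]"
| "preds h (Run b) = [Begin b, RunAct b]"
| "preds h (RunAct b) = [ActAct2 b, Run b]"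
| "preds h (Out b) = [Run b]"

text \<open>For b = True: Start1/Start2 delay the START test S, Act1 delays the
  ACTIVE test A, StartAct computes A(r) and S(r-1), Begin computes S(r) or that, ActAct1/ActAct2
  compute A(r) and A(r-1), and Run/RunAct form the feedback loop of the recurrence.  For b = False
  every gate is dualised and the half tests are the negated ones.\<close>
fun update :: "nat \<Rightarrow> node \<Rightarrow> (node \<Rightarrow> bool) \<Rightarrow> bool" where
  "update h (Inp i) s = False"
| "update h (Delay g k m) s = (if m = 1 then s (Inp (half_index h g k)) else s (Delay g k (m - 1)))"
| "update h (Acc g c k) s =
     (if k = 1 then s (Inp (half_index h g 1)) else gate c (s (Acc g c (k - 1))) (s (Delay g k (k - 1))))"
| "update h (Start1 b) s = s (Acc b b h)"
| "update h (Start2 b) s = s (Start1 b)"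
| "update h (Act1 b) s = s (Acc (\<not> b) b h)"
| "update h (StartAct b) s = gate b (s (Act1 b)) (s (Start2 b))"
| "update h (Begin b) s = gate (\<not> b) (s (Start2 b)) (s (StartAct b))"
| "update h (ActAct1 b) s = gate b (s (Acc (\<not> b) b h)) (s (Act1 b))"
| "update h (ActAct2 b) s = s (ActAct1 b)"
| "update h (Run b) s = gate (\<not> b) (s (Begin b)) (s (RunAct b))"
| "update h (RunAct b) s = gate b (s (ActAct2 b)) (s (Run b))"
| "update h (Out b) s = s (Run b)"

fun succs :: "nat \<Rightarrow> node \<Rightarrow> node list" where
  "succs h (Inp i) =
     (if i \<le> h then (if i = 1 then [Acc True True 1, Acc True False 1] else [Delay True i 1])
      else (if i = h + 1 then [Acc False True 1, Acc False False 1] else [Delay False (i - h) 1]))"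
| "succs h (Delay g k m) = (if m + 1 < k then [Delay g k (m + 1)] else [Acc g True k, Acc g False k])"
| "succs h (Acc g c k) =
     (if k < h then [Acc g c (k + 1)] else if g = c then [Start1 g] else [Act1 c, ActAct1 c])"
| "succs h (Start1 b) = [Start2 b]"
| "succs h (Start2 b) = [StartAct b, Begin b]"
| "succs h (Act1 b) = [StartAct b, ActAct1 b]"
| "succs h (StartAct b) = [Begin b]"
| "succs h (Begin b) = [Run b]"
| "succs h (ActAct1 b) = [ActAct2 b]"
| "succs h (ActAct2 b) = [RunAct b]"
| "succs h (Run b) = [RunAct b, Out b]"
| "succs h (RunAct b) = [Run b]"
| "succs h (Out b) = []"

lemma internal_nodes: "a \<in> nodes h - inputs h \<longleftrightarrow> valid h a \<and> \<not> is_input a"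
  by (cases a) (auto simp: nodes_def inputs_def)

lemma finite_network_nodes: "finite (nodes h)"
proof -
  have "nodes h \<subseteq> Inp ` {..2 * h} \<union> (\<lambda>(g, k, m). Delay g k m) ` (UNIV \<times> {..h} \<times> {..h})
     \<union> (\<lambda>(g, c, k). Acc g c k) ` (UNIV \<times> UNIV \<times> {..h})
     \<union> (\<Union>b. {Start1 b, Start2 b, Act1 b, StartAct b, Begin b, ActAct1 b, ActAct2 b, Run b, RunAct b, Out b})"
    (is "_ \<subseteq> ?N")
  proof
    fix a assume "a \<in> nodes h"
    then show "a \<in> ?N" by (cases a) (auto simp: nodes_def image_iff)
  qed
  moreover have "finite ?N" by simp
  ultimately show ?thesis by (rule finite_subset)
qed

lemma network:
  assumes "1 \<le> h"
  shows "node_network (nodes h) (inputs h) (preds h) (update h)"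
proof
  show "finite (nodes h)" by (rule finite_network_nodes)
  show "inputs h \<subseteq> nodes h" by (auto simp: nodes_def inputs_def)
  fix a assume "a \<in> nodes h - inputs h"
  then show "set (preds h a) \<subseteq> nodes h"
    by (cases a) (use assms in \<open>auto simp: internal_nodes nodes_def half_index_def\<close>)
  fix s s' :: "node \<Rightarrow> bool" assume "\<And>z. z \<in> set (preds h a) \<Longrightarrow> s z = s' z"
  then show "update h a s = update h a s'" by (cases a) auto
qed

lemma update_mono: "mono (update h a)"
  by (cases a) (auto intro!: monoI simp: gate_def le_fun_def)

lemma succs_complete: "valid h a \<Longrightarrow> b \<in> set (preds h a) \<Longrightarrow> a \<in> set (succs h b)"
  by (cases a) (auto simp: half_index_def split: if_splits)

lemma length_preds: "length (preds h a) \<le> 2"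
  by (cases a) auto

lemma length_succs: "length (succs h a) \<le> 2"
  by (cases a) auto

lemma degrees:
  assumes h_pos: "1 \<le> h" and v: "v \<in> to_nat ` nodes h"
  shows "indeg (to_nat ` nodes h) (to_nat ` inputs h) (enc_upd (update h)) v \<le> 2 \<and>
    outdeg (to_nat ` nodes h) (to_nat ` inputs h) (enc_upd (update h)) v \<le> 2"
proof -
  interpret net: node_network "nodes h" "inputs h" "preds h" "update h" by (rule network[OF h_pos])
  obtain a :: node where a: "v = to_nat a" using v by blast
  have "outdeg (to_nat ` nodes h) (to_nat ` inputs h) (enc_upd (update h)) (to_nat a) \<le> length (succs h a)"
    by (rule net.outdeg_le) (auto simp: nodes_def intro: succs_complete)
  then show ?thesis using net.indeg_le[of a] length_preds[of h a] length_succs[of h a] unfolding a by linarith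
qed

lemma outputs_are_sinks:
  assumes h_pos: "1 \<le> h"
  shows "outdeg (to_nat ` nodes h) (to_nat ` inputs h) (enc_upd (update h)) (to_nat (Out b)) = 0"
proof -
  interpret net: node_network "nodes h" "inputs h" "preds h" "update h" by (rule network[OF h_pos])
  show ?thesis using net.outdeg_le[of "Out b" "[]"] succs_complete[of h _ "Out b"] by (auto simp: nodes_def)
qed

locale network_run =
  fixes h :: nat and y :: "int \<Rightarrow> node \<Rightarrow> bool"
  assumes h_pos: "1 \<le> h"
    and step: "\<And>t a. 1 \<le> t \<Longrightarrow> valid h a \<Longrightarrow> \<not> is_input a \<Longrightarrow> y t a = update h a (y (t - 1))"
begin

definition inp :: "bool \<Rightarrow> nat \<Rightarrow> int \<Rightarrow> bool" where
  "inp g k r = y r (Inp (half_index h g k))"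

definition half_test :: "bool \<Rightarrow> bool \<Rightarrow> int \<Rightarrow> bool" where
  "half_test g c r = (if c then \<forall>k\<in>{1..h}. inp g k r else \<exists>k\<in>{1..h}. inp g k r)"

text \<open>The update rule, with the previous time given explicitly (convenient for rewriting).\<close>
lemma step_at: "1 \<le> t \<Longrightarrow> valid h a \<Longrightarrow> \<not> is_input a \<Longrightarrow> t - 1 = t' \<Longrightarrow> y t a = update h a (y t')"
  using step by auto

lemma delay_value:
  "1 \<le> m \<Longrightarrow> m < k \<Longrightarrow> k \<le> h \<Longrightarrow> int m \<le> t \<Longrightarrow> y t (Delay g k m) = inp g k (t - int m)"
proof (induction m arbitrary: t)
  case 0 then show ?case by simp
next
  case (Suc m)
  have upd: "y t (Delay g k (Suc m)) = update h (Delay g k (Suc m)) (y (t - 1))"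
    using Suc.prems by (intro step) auto
  show ?case
  proof (cases "m = 0")
    case True then show ?thesis using upd by (simp add: inp_def)
  next
    case False
    have "y (t - 1) (Delay g k m) = inp g k (t - 1 - int m)"
      using Suc False by auto
    then show ?thesis using upd False by (simp add: algebra_simps)
  qed
qed

lemma acc_value:
  "1 \<le> k \<Longrightarrow> k \<le> h \<Longrightarrow> int k \<le> t \<Longrightarrow> y t (Acc g c k) =
     (if c then \<forall>k'\<in>{1..k}. inp g k' (t - int k) else \<exists>k'\<in>{1..k}. inp g k' (t - int k))"
proof (induction k arbitrary: t)
  case 0 then show ?case by simp
next
  case (Suc k)
  have upd: "y t (Acc g c (Suc k)) = update h (Acc g c (Suc k)) (y (t - 1))"
    using Suc.prems by (intro step) auto
  show ?case
  proof (cases "k = 0")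
    case True then show ?thesis using upd by (simp add: inp_def)
  next
    case False
    have acc: "y (t - 1) (Acc g c k) =
        (if c then \<forall>k'\<in>{1..k}. inp g k' (t - 1 - int k) else \<exists>k'\<in>{1..k}. inp g k' (t - 1 - int k))"
      using Suc False by auto
    have delay: "y (t - 1) (Delay g (Suc k) k) = inp g (Suc k) (t - 1 - int k)"
      using Suc False by (intro delay_value) auto
    have shift: "t - int (Suc k) = t - 1 - int k" by simp
    have split: "{1..Suc k} = insert (Suc k) {1..k}" using False by auto
    show ?thesis using upd False acc delay unfolding shift split by (auto simp: gate_def)
  qed
qed

lemma acc_full: "0 \<le> r \<Longrightarrow> y (r + int h) (Acc g c h) = half_test g c r"
  using acc_value[of h "r + int h" g c] h_pos by (simp add: half_test_def)

lemma start1_value: "0 \<le> r \<Longrightarrow> y (r + int h + 1) (Start1 b) = half_test b b r"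
  using step_at[of "r + int h + 1" "Start1 b" "r + int h"] acc_full by simp

lemma start2_value: "0 \<le> r \<Longrightarrow> y (r + int h + 2) (Start2 b) = half_test b b r"
  using step_at[of "r + int h + 2" "Start2 b" "r + int h + 1"] start1_value by simp

lemma act1_value: "0 \<le> r \<Longrightarrow> y (r + int h + 1) (Act1 b) = half_test (\<not> b) b r"
  using step_at[of "r + int h + 1" "Act1 b" "r + int h"] acc_full by simp

lemma start_act_value:
  "1 \<le> r \<Longrightarrow> y (r + int h + 2) (StartAct b) = gate b (half_test (\<not> b) b r) (half_test b b (r - 1))"
  using step_at[of "r + int h + 2" "StartAct b" "r + int h + 1"] act1_value[of r b] start2_value[of "r - 1" b]
  by (simp add: add.commute add.left_commute)

lemma begin_value:
  "0 \<le> r \<Longrightarrow> y (r + int h + 3) (Begin b) = gate (\<not> b) (half_test b b r) (y (r + int h + 2) (StartAct b))"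
  using step_at[of "r + int h + 3" "Begin b" "r + int h + 2"] start2_value[of r b] by simp

lemma act_act1_value:
  "1 \<le> r \<Longrightarrow> y (r + int h + 1) (ActAct1 b) = gate b (half_test (\<not> b) b r) (half_test (\<not> b) b (r - 1))"
  using step_at[of "r + int h + 1" "ActAct1 b" "r + int h"] acc_full[of r] act1_value[of "r - 1" b]
  by (simp add: add.commute add.left_commute)

lemma act_act2_value:
  "1 \<le> r \<Longrightarrow> y (r + int h + 2) (ActAct2 b) = gate b (half_test (\<not> b) b r) (half_test (\<not> b) b (r - 1))"
  using step_at[of "r + int h + 2" "ActAct2 b" "r + int h + 1"] act_act1_value by simp

lemma run_value: "0 \<le> r \<Longrightarrow> y (r + int h + 4) (Run b) =
   gate (\<not> b) (y (r + int h + 3) (Begin b)) (gate b (y (r + int h + 2) (ActAct2 b)) (y (r + int h + 2) (Run b)))"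
  using step_at[of "r + int h + 4" "Run b" "r + int h + 3"] step_at[of "r + int h + 3" "RunAct b" "r + int h + 2"]
  by simp

lemma out_value: "0 \<le> r \<Longrightarrow> y (r + int h + 5) (Out b) = y (r + int h + 4) (Run b)"
  using step_at[of "r + int h + 5" "Out b" "r + int h + 4"] by simp

text \<open>For b = False the
  whole computation is the dual of the one for b = True.\<close>
lemma run_detects_active_prefix:
  assumes start_sig: "\<And>r. r \<in> {0..M} \<Longrightarrow> half_test b b r = (st r = b)"
    and act_sig: "\<And>r. r \<in> {0..M} \<Longrightarrow> half_test (\<not> b) b r = (act r = b)"
    and start0: "st 0" and not_act0: "\<not> act 0" and no_restart: "\<And>r. r \<in> {1..M} \<Longrightarrow> \<not> st r"
  shows "int n \<le> M \<Longrightarrow> y (int n + int h + 4) (Run b) = ((\<forall>u\<in>{1..int n}. act u) = b)"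
proof (induction n rule: less_induct)
  case (less n)
  consider "n = 0" | "n = 1" | "n \<ge> 2" by linarith
  then show ?case
  proof cases
    case 1
    have "half_test b b 0 = b" using start_sig[of 0] start0 less.prems 1 by simp
    then have "y (0 + int h + 4) (Run b) = b"
      using run_value[of 0 b] begin_value[of 0 b] by (cases b) (auto simp: gate_def)
    then show ?thesis using 1 by simp
  next
    case 2
    have sig: "half_test b b 0 = b" "half_test (\<not> b) b 0 = (\<not> b)"
      "half_test b b 1 = (\<not> b)" "half_test (\<not> b) b 1 = (act 1 = b)"
      using start_sig[of 0] start_sig[of 1] act_sig[of 0] act_sig[of 1] start0 not_act0 no_restart[of 1]
        less.prems 2 by auto
    have "y (1 + int h + 4) (Run b) = (act 1 = b)"
      using run_value[of 1 b] begin_value[of 1 b] start_act_value[of 1 b] act_act2_value[of 1 b] sig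
      by (cases b) (auto simp: gate_def)
    then show ?thesis using 2 by simp
  next
    case 3
    have "int (n - 2) \<le> M" using less.prems by simp
    then have ih: "y (int n + int h + 2) (Run b) = ((\<forall>u\<in>{1..int n - 2}. act u) = b)"
      using less.IH[of "n - 2"] 3 by (simp add: of_nat_diff algebra_simps)
    have n_in: "int n \<in> {1..M}" "int n - 1 \<in> {1..M}" using less.prems 3 by auto
    have sig: "half_test b b (int n) = (\<not> b)" "half_test b b (int n - 1) = (\<not> b)"
      "half_test (\<not> b) b (int n) = (act (int n) = b)" "half_test (\<not> b) b (int n - 1) = (act (int n - 1) = b)"
      using n_in start_sig act_sig no_restart by auto
    have "y (int n + int h + 4) (Run b) =
        gate b (gate b (act (int n) = b) (act (int n - 1) = b)) ((\<forall>u\<in>{1..int n - 2}. act u) = b)"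
      using run_value[of "int n" b] begin_value[of "int n" b] start_act_value[of "int n" b]
        act_act2_value[of "int n" b] sig ih 3 by (cases b) (auto simp: gate_def)
    also have "\<dots> = ((\<forall>u\<in>{1..int n}. act u) = b)"
    proof -
      have "{1..int n} = insert (int n) (insert (int n - 1) {1..int n - 2})" using 3 by auto
      then show ?thesis by (cases b) (auto simp: gate_def)
    qed
    finally show ?thesis .
  qed
qed

definition pattern :: "int \<Rightarrow> nat \<Rightarrow> bool" where
  "pattern r = (\<lambda>i. y r (Inp i))"

lemma half_test_signals:
  assumes "in_A (2 * h) (pattern r)"
  shows "half_test b b r = (is_START (2 * h) (pattern r) = b)"
    and "half_test (\<not> b) b r = (is_ACTIVE (2 * h) (pattern r) = b)"
  using balanced_halves[OF assms]
  by (cases b; simp add: half_test_def inp_def half_index_def pattern_def start_iff active_iff)+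

lemma output_detects_active_prefix:
  assumes balanced: "\<And>r. r \<in> {0..M} \<Longrightarrow> in_A (2 * h) (pattern r)"
    and start0: "is_START (2 * h) (pattern 0)"
    and no_restart: "\<And>r. r \<in> {1..M} \<Longrightarrow> \<not> is_START (2 * h) (pattern r)"
    and n: "0 \<le> n" "n \<le> M"
  shows "y (n + int h + 5) (Out b) = ((\<forall>u\<in>{1..n}. is_ACTIVE (2 * h) (pattern u)) = b)"
proof -
  have not_act0: "\<not> is_ACTIVE (2 * h) (pattern 0)"
    using start0 h_pos by (auto simp: start_iff active_iff)
  obtain m where m: "n = int m" using n(1) nonneg_int_cases by blast
  have "y (int m + int h + 4) (Run b) = ((\<forall>u\<in>{1..int m}. is_ACTIVE (2 * h) (pattern u)) = b)"
    by (rule run_detects_active_prefix[where M = M and st = "\<lambda>r. is_START (2 * h) (pattern r)"])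
      (use half_test_signals balanced start0 not_act0 no_restart m n in auto)
  then show ?thesis using out_value[of n b] m n by simp
qed

end

lemma active_prefix:
  fixes j n M :: int
  assumes "0 \<le> j" "n \<le> M" and active: "\<forall>s\<in>{1..j}. act s" and stop: "j < M \<longrightarrow> \<not> act (j + 1)"
  shows "(\<forall>u\<in>{1..n}. act u) \<longleftrightarrow> n \<le> j"
proof
  assume all: "\<forall>u\<in>{1..n}. act u"
  show "n \<le> j"
  proof (rule ccontr)
    assume "\<not> n \<le> j"
    then have "j + 1 \<in> {1..n}" "j < M" using assms by auto
    then show False using all stop by blast
  qed
qed (use active in auto)

lemma network_dynamics:
  assumes h_pos: "1 \<le> h"
    and run: "is_run (to_nat ` nodes h) (to_nat ` inputs h) (enc_upd (update h)) t0 x" and t0: "t0 \<le> 0"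
    and balanced: "\<forall>s\<in>{0..M}. in_A (2 * h) (\<lambda>i. x s (to_nat (Inp i)))"
    and start0: "is_START (2 * h) (\<lambda>i. x 0 (to_nat (Inp i)))"
    and no_restart: "\<forall>s\<in>{1..M}. \<not> is_START (2 * h) (\<lambda>i. x s (to_nat (Inp i)))"
    and j: "0 \<le> j" "j \<le> M"
    and active: "\<forall>s\<in>{1..j}. is_ACTIVE (2 * h) (\<lambda>i. x s (to_nat (Inp i)))"
    and stop: "j < M \<longrightarrow> \<not> is_ACTIVE (2 * h) (\<lambda>i. x (j + 1) (to_nat (Inp i)))"
  shows "(\<forall>s\<in>{int h + 5..int h + 5 + j}. x s (to_nat (Out True)) \<and> \<not> x s (to_nat (Out False))) \<and>
         (\<forall>s\<in>{int h + 5 + j<..int h + 5 + M}. \<not> x s (to_nat (Out True)) \<and> x s (to_nat (Out False)))"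
proof -
  interpret net: node_network "nodes h" "inputs h" "preds h" "update h" by (rule network[OF h_pos])
  interpret network_run h "\<lambda>t a. x t (to_nat a)"
  proof
    fix t :: int and a assume "1 \<le> t" "valid h a" "\<not> is_input a"
    then show "x t (to_nat a) = update h a (\<lambda>b. x (t - 1) (to_nat b))"
      using net.run_step[OF run, of t a] t0 internal_nodes[of a h] by simp
  qed (rule h_pos)
  have pattern: "pattern r = (\<lambda>i. x r (to_nat (Inp i)))" for r by (simp add: pattern_def)
  have out: "x s (to_nat (Out b)) = ((s - (int h + 5) \<le> j) = b)"
    if "s \<in> {int h + 5..int h + 5 + M}" for s b
  proof -
    have "x (s - (int h + 5) + int h + 5) (to_nat (Out b)) =
        ((\<forall>u\<in>{1..s - (int h + 5)}. is_ACTIVE (2 * h) (pattern u)) = b)"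
      by (rule output_detects_active_prefix) (use that balanced start0 no_restart in \<open>auto simp: pattern\<close>)
    then show ?thesis
      using active_prefix[of j "s - (int h + 5)" M] j active stop that by (simp add: pattern)
  qed
  show ?thesis using out j by auto
qed

theorem lemma6:
  fixes L :: nat
  assumes "L > 0" and "even L"
  shows "\<exists>(\<mu>::int) V I f (p::nat \<Rightarrow> nat) q1 q2.
    \<mu> > 0 \<and> bn_wf V I f \<and>
    inj_on p {1..L} \<and> I = p ` {1..L} \<and>
    q1 \<in> V - I \<and> q2 \<in> V - I \<and> q1 \<noteq> q2 \<and>
    cooperative V I f \<and>
    (\<forall>v\<in>V. indeg V I f v \<le> 2 \<and> outdeg V I f v \<le> 2) \<and>
    (\<forall>v\<in>I. indeg V I f v = 0) \<and>
    outdeg V I f q1 = 0 \<and> outdeg V I f q2 = 0 \<and>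
    (\<forall>t0 x (M::int) (j::int).
       t0 \<le> 0 \<and> is_run V I f t0 x \<and> M > 1 \<and>
       (\<forall>s\<in>{0..M}. in_A L (\<lambda>i. x s (p i))) \<and>
       is_START L (\<lambda>i. x 0 (p i)) \<and>
       (\<forall>s\<in>{1..M}. \<not> is_START L (\<lambda>i. x s (p i))) \<and>
       0 \<le> j \<and> j \<le> M \<and>
       (\<forall>s\<in>{1..j}. is_ACTIVE L (\<lambda>i. x s (p i))) \<and>
       (j < M \<longrightarrow> \<not> is_ACTIVE L (\<lambda>i. x (j + 1) (p i)))
       \<longrightarrow>
       (\<forall>s\<in>{\<mu>..\<mu> + j}. x s q1 \<and> \<not> x s q2) \<and>
       (\<forall>s\<in>{\<mu> + j<..\<mu> + M}. \<not> x s q1 \<and> x s q2))"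
proof -
  obtain h where L: "L = 2 * h" using assms(2) by (auto elim: evenE)
  have h_pos: "1 \<le> h" using assms(1) L by simp
  interpret net: node_network "nodes h" "inputs h" "preds h" "update h" by (rule network[OF h_pos])
  let ?V = "to_nat ` nodes h" and ?I = "to_nat ` inputs h" and ?f = "enc_upd (update h)"
  show ?thesis unfolding L
  proof (rule exI[of _ "int h + 5"], rule exI[of _ ?V], rule exI[of _ ?I], rule exI[of _ ?f],
      rule exI[of _ "\<lambda>i. to_nat (Inp i)"], rule exI[of _ "to_nat (Out True)"],
      rule exI[of _ "to_nat (Out False)"], intro conjI)
    show "0 < int h + 5" by simp
    show "bn_wf ?V ?I ?f" by (rule net.wf)
    show "inj_on (\<lambda>i. to_nat (Inp i)) {1..2 * h}" by (simp add: inj_on_def)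
    show "?I = (\<lambda>i. to_nat (Inp i)) ` {1..2 * h}" by (auto simp: inputs_def)
    show "to_nat (Out True) \<in> ?V - ?I" "to_nat (Out False) \<in> ?V - ?I"
      by (auto simp: nodes_def inputs_def)
    show "to_nat (Out True) \<noteq> to_nat (Out False)" by simp
    show "cooperative ?V ?I ?f" by (rule net.cooperative[OF update_mono])
    show "\<forall>v\<in>?V. indeg ?V ?I ?f v \<le> 2 \<and> outdeg ?V ?I ?f v \<le> 2" using degrees[OF h_pos] by simp
    show "\<forall>v\<in>?I. indeg ?V ?I ?f v = 0" by (simp add: input_indeg_zero)
    show "outdeg ?V ?I ?f (to_nat (Out True)) = 0" "outdeg ?V ?I ?f (to_nat (Out False)) = 0"
      by (rule outputs_are_sinks[OF h_pos])+
  qed (intro allI impI, elim conjE, rule network_dynamics[OF h_pos], assumption+)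
qed


end
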